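(* Let $S$ be a right LCM monoid, and let $F_1,F_2$ be accurate foundation sets for $S$. Then for every unital $*$-homomorphism $\pi$ from $C^*(S)$ into a unital $C^*$-algebra, the following are equivalent: (1) $\sum_{f\in F_1}\pi(e_{fS})=1$ and $\sum_{f\in F_2}\pi(e_{fS})=1$; (2) $\sum_{f\in F_1\cdot F_2}\pi(e_{fS})=1$, where $F_1\cdot F_2=\{st\mid s\in F_1,t\in F_2\}$. (That is, the boundary relation $\sum_{f\in F}e_{fS}=1$ for both $F_1$ and $F_2$ is equivalent to the boundary relation for $F_1\cdot F_2$.)
   Context: A right LCM monoid is a countable discrete monoid $S$ that is left cancellative and such that for all $s,t\in S$ the intersection $sS\cap tS$ is either empty or equal to $rS$ for some $r\in S$. A finite subset $F\subset S$ is a foundation set if for every $t\in S$ there is $s\in F$ with $sS\cap tS\neq\emptyset$; it is accurate if $fS\cap f'S=\emptyset$ for distinct $f,f'\in F$. The full semigroup $C^*$-algebra $C^*(S)$ (in the sense of Li) is the universal $C^*$-algebra generated by isometries $\{v_s: s\in S\}$ and projections $\{e_X : X\in\mathcal{J}(S)\}$, where $\mathcal{J}(S)=\{\emptyset\}\cup\{sS: s\in S\}$, subject to $v_{st}=v_sv_t$, $v_se_Xv_s^*=e_{sX}$, $e_S=1$, $e_\emptyset=0$, $e_Xe_Y=e_{X\cap Y}$; in particular $e_{sS}=v_sv_s^*$. *)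

theory Defs
  imports Complex_Main "HOL-Library.Countable"
begin

definition pideal :: "'a::monoid_mult \<Rightarrow> 'a set" where
  "pideal s = range (\<lambda>x. s * x)"

definition right_LCM_monoid :: "'a::monoid_mult itself \<Rightarrow> bool" where
  "right_LCM_monoid _ \<longleftrightarrow>
     (\<forall>s t u :: 'a. s * t = s * u \<longrightarrow> t = u) \<and>
     (\<forall>s t :: 'a. pideal s \<inter> pideal t = {} \<or> (\<exists>r. pideal s \<inter> pideal t = pideal r))"

definition constr_ideals :: "'a::monoid_mult set set" where
  "constr_ideals = insert {} (range pideal)"

definition foundation_set :: "'a::monoid_mult set \<Rightarrow> bool" where
  "foundation_set F \<longleftrightarrow> finite F \<and> (\<forall>t. \<exists>s\<in>F. pideal s \<inter> pideal t \<noteq> {})"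

definition accurate :: "'a::monoid_mult set \<Rightarrow> bool" where
  "accurate F \<longleftrightarrow> (\<forall>f\<in>F. \<forall>f'\<in>F. f \<noteq> f' \<longrightarrow> pideal f \<inter> pideal f' = {})"

definition set_prod :: "'a::monoid_mult set \<Rightarrow> 'a set \<Rightarrow> 'a set" where
  "set_prod F1 F2 = {s * t | s t. s \<in> F1 \<and> t \<in> F2}"

text \<open>A unital C*-algebra: a (real) Banach algebra with unit, carrying in addition a complex
  scalar multiplication sc extending the real one, and an involution st with the C*-identity.\<close>

definition unital_cstar_algebra ::
  "(complex \<Rightarrow> 'b::{real_normed_algebra_1,banach} \<Rightarrow> 'b) \<Rightarrow> ('b \<Rightarrow> 'b) \<Rightarrow> bool" where
  "unital_cstar_algebra sc st \<longleftrightarrow>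
     (\<forall>r x. sc (complex_of_real r) x = scaleR r x) \<and>
     (\<forall>a x y. sc a (x + y) = sc a x + sc a y) \<and>
     (\<forall>a b x. sc (a + b) x = sc a x + sc b x) \<and>
     (\<forall>a b x. sc (a * b) x = sc a (sc b x)) \<and>
     (\<forall>a x y. sc a (x * y) = sc a x * y \<and> sc a (x * y) = x * sc a y) \<and>
     (\<forall>a x. norm (sc a x) = cmod a * norm x) \<and>
     (\<forall>x. st (st x) = x) \<and>
     (\<forall>x y. st (x + y) = st x + st y) \<and>
     (\<forall>x y. st (x * y) = st y * st x) \<and>
     (\<forall>a x. st (sc a x) = sc (cnj a) (st x)) \<and>
     (\<forall>x. norm (st x * x) = (norm x)\<^sup>2)"

text \<open>By the universal property, unital *-homomorphisms from C*(S) into B correspond exactly to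
  families (v s, e X) = (pi(v_s), pi(e_X)) in B satisfying the defining relations of C*(S).\<close>

definition li_representation ::
  "('b::ring_1 \<Rightarrow> 'b) \<Rightarrow> ('a::monoid_mult \<Rightarrow> 'b) \<Rightarrow> ('a set \<Rightarrow> 'b) \<Rightarrow> bool" where
  "li_representation st v e \<longleftrightarrow>
     (\<forall>s. st (v s) * v s = 1) \<and>
     (\<forall>X\<in>constr_ideals. st (e X) = e X \<and> e X * e X = e X) \<and>
     (\<forall>s t. v (s * t) = v s * v t) \<and>
     (\<forall>s. \<forall>X\<in>constr_ideals. v s * e X * st (v s) = e ((\<lambda>x. s * x) ` X)) \<and>
     e UNIV = 1 \<and> e {} = 0 \<and>
     (\<forall>X\<in>constr_ideals. \<forall>Y\<in>constr_ideals. e X * e Y = e (X \<inter> Y))"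

end

theory Submission
  imports Defs
begin

(* For an accurate F1 the products s t (s in F1, t in F2) are pairwise distinct and
   e(stS) = v_s e(tS) v_s^*, so the boundary sum of F1 F2 is the sum of v_s q v_s^* over s in F1,
   q being the boundary sum of F2. Accuracy also gives the isometries v_s (s in F1) orthogonal
   ranges, v_s^* v_t = 0 for s ~= t, so compressing by any one v_s recovers q: that sum being 1
   forces q = 1, and then it reduces to the boundary sum of F1. The argument is purely algebraic:
   only the ring structure of the target and the relations of C*(S) are used, never the norm,
   the complex scalars or the C*-identity; of the hypotheses on F1 and F2 only the accuracy and
   nonemptiness of F1 are needed. *)

lemma right_LCM_monoid_left_cancel:
  fixes s t u :: "'a::monoid_mult"
  assumes "right_LCM_monoid TYPE('a)" and "s * t = s * u"
  shows "t = u"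
  using assms unfolding right_LCM_monoid_def by blast

lemma foundation_set_nonempty: "foundation_set F \<Longrightarrow> F \<noteq> {}"
  unfolding foundation_set_def by blast

lemma pideal_one [simp]: "pideal 1 = UNIV"
  unfolding pideal_def by auto

lemma mult_mem_pideal: "s * t \<in> pideal s"
  unfolding pideal_def by blast

lemma image_mult_pideal: "(\<lambda>x. s * x) ` pideal t = pideal (s * t)"
  unfolding pideal_def by (auto simp: image_image mult.assoc)

lemma pideal_in_constr_ideals: "pideal s \<in> constr_ideals"
  unfolding constr_ideals_def by blast

lemma inj_on_mult_accurate:
  fixes F1 F2 :: "'a::monoid_mult set"
  assumes left_cancel: "\<And>s t u :: 'a. s * t = s * u \<Longrightarrow> t = u" and "accurate F1"
  shows "inj_on (\<lambda>(s, t). s * t) (F1 \<times> F2)"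
proof (rule inj_onI, clarify)
  fix s t s' t'
  assume "s \<in> F1" "s' \<in> F1" and eq: "s * t = s' * t'"
  have "s * t \<in> pideal s \<inter> pideal s'"
    using mult_mem_pideal[of s t] mult_mem_pideal[of s' t'] eq by simp
  with \<open>accurate F1\<close> \<open>s \<in> F1\<close> \<open>s' \<in> F1\<close> have "s = s'"
    unfolding accurate_def by blast
  with eq left_cancel show "s = s' \<and> t = t'" by blast
qed

lemma sum_set_prod_accurate:
  fixes F1 F2 :: "'a::monoid_mult set"
  assumes "\<And>s t u :: 'a. s * t = s * u \<Longrightarrow> t = u" and "accurate F1"
  shows "(\<Sum>f\<in>set_prod F1 F2. g f) = (\<Sum>s\<in>F1. \<Sum>t\<in>F2. g (s * t))"
proof -
  have "set_prod F1 F2 = (\<lambda>(s, t). s * t) ` (F1 \<times> F2)"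
    unfolding set_prod_def by auto
  then have "(\<Sum>f\<in>set_prod F1 F2. g f) = (\<Sum>(s, t)\<in>F1 \<times> F2. g (s * t))"
    using sum.reindex[OF inj_on_mult_accurate[OF assms]] by (simp add: comp_def case_prod_beta)
  then show ?thesis
    by (simp add: sum.cartesian_product)
qed

lemma sum_orthogonal_isometries_compress:
  fixes v :: "'i \<Rightarrow> 'b::ring_1"
  assumes "finite F" "s \<in> F" "st (v s) * v s = 1"
    and orth: "\<And>t. t \<in> F \<Longrightarrow> t \<noteq> s \<Longrightarrow> st (v s) * v t = 0"
  shows "st (v s) * (\<Sum>t\<in>F. v t * x t) = x s"
proof -
  have "st (v s) * (\<Sum>t\<in>F. v t * x t) = (\<Sum>t\<in>F. (st (v s) * v t) * x t)"
    by (simp add: sum_distrib_left mult.assoc)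
  also have "\<dots> = (st (v s) * v s) * x s"
    using assms(1,2) orth by (simp add: sum.remove)
  finally show ?thesis
    using assms(3) by simp
qed

context
  fixes st :: "'b::ring_1 \<Rightarrow> 'b" and v :: "'a::monoid_mult \<Rightarrow> 'b" and e :: "'a set \<Rightarrow> 'b"
  assumes rep: "li_representation st v e"
begin

lemma li_isometry: "st (v s) * v s = 1"
  using rep unfolding li_representation_def by blast

lemma li_conj_pideal: "v s * e (pideal t) * st (v s) = e (pideal (s * t))"
  using rep pideal_in_constr_ideals[of t] unfolding li_representation_def
  by (simp add: image_mult_pideal)

lemma li_range_projection: "e (pideal s) = v s * st (v s)"
  using li_conj_pideal[of s 1] rep unfolding li_representation_def by simp

lemma li_disjoint_orthogonal:
  assumes "pideal s \<inter> pideal t = {}"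
  shows "st (v s) * v t = 0"
proof -
  have "e (pideal s) * e (pideal t) = 0"
    using rep pideal_in_constr_ideals[of s] pideal_in_constr_ideals[of t] assms
    unfolding li_representation_def by simp
  then have "st (v s) * (v s * st (v s)) * (v t * st (v t)) * v t = 0"
    by (simp add: li_range_projection mult.assoc)
  then show ?thesis
    by (simp add: mult.assoc li_isometry flip: mult.assoc[of "st (v s)" "v s"])
qed

lemma li_sum_set_prod:
  assumes "right_LCM_monoid TYPE('a)" and "accurate F1"
  shows "(\<Sum>f\<in>set_prod F1 F2. e (pideal f))
           = (\<Sum>s\<in>F1. v s * ((\<Sum>t\<in>F2. e (pideal t)) * st (v s)))"
  using right_LCM_monoid_left_cancel[OF assms(1)] assms(2)
  by (simp add: sum_set_prod_accurate flip: li_conj_pideal)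
     (simp add: sum_distrib_left sum_distrib_right mult.assoc)

end

theorem lemma2p3:
  fixes F1 F2 :: "'a::{monoid_mult,countable} set"
    and sc :: "complex \<Rightarrow> 'b::{real_normed_algebra_1,banach} \<Rightarrow> 'b"
    and st :: "'b \<Rightarrow> 'b"
    and v :: "'a \<Rightarrow> 'b" and e :: "'a set \<Rightarrow> 'b"
  assumes "right_LCM_monoid TYPE('a)"
    and "foundation_set F1" and "accurate F1"
    and "foundation_set F2" and "accurate F2"
    and "unital_cstar_algebra sc st"
    and "li_representation st v e"
  shows "((\<Sum>f\<in>F1. e (pideal f)) = 1 \<and> (\<Sum>f\<in>F2. e (pideal f)) = 1)
         \<longleftrightarrow> (\<Sum>f\<in>set_prod F1 F2. e (pideal f)) = 1"
proof -
  define q where "q = (\<Sum>t\<in>F2. e (pideal t))"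
  have prod_sum: "(\<Sum>f\<in>set_prod F1 F2. e (pideal f)) = (\<Sum>s\<in>F1. v s * (q * st (v s)))"
    unfolding q_def using li_sum_set_prod[OF assms(7,1,3)] .
  have F1_sum: "(\<Sum>f\<in>F1. e (pideal f)) = (\<Sum>s\<in>F1. v s * (1 * st (v s)))"
    using li_range_projection[OF assms(7)] by simp
  have "q = 1" if "(\<Sum>s\<in>F1. v s * (q * st (v s))) = 1"
  proof -
    obtain s where "s \<in> F1"
      using foundation_set_nonempty[OF assms(2)] by blast
    moreover have "finite F1"
      using assms(2) unfolding foundation_set_def by blast
    ultimately have "st (v s) * v s = q * st (v s) * v s"
      using that sum_orthogonal_isometries_compress[of F1 s st v "\<lambda>s. q * st (v s)"]
        li_isometry[OF assms(7)] li_disjoint_orthogonal[OF assms(7)] assms(3)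
      unfolding accurate_def by auto
    then show ?thesis
      by (simp add: mult.assoc li_isometry[OF assms(7)])
  qed
  then show ?thesis
    unfolding q_def[symmetric] prod_sum F1_sum by auto
qed

end
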